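(* Let $o_{n,i}$ be the probability that a random Bernoulli text of length $n$ contains exactly $i$ clumps of $w$. Then $$\sum_{n,i\ge0}o_{n,i}\,u^i z^n=N(z)+\frac{u\,R(z)\,U(z)}{1-u\,M(z)+(u-1)K(z)}.$$
   Context: Let $\mathcal{A}$ be a finite alphabet with $|\mathcal{A}|\ge2$ and $w\in\mathcal{A}^*$ a fixed word of length $\ell=|w|\ge 2$. Bernoulli model: each letter $a$ has probability $p_a>0$, $\sum_a p_a=1$, $\mathbf{P}(a_1\cdots a_n)=\prod_i p_{a_i}$; for a language $L$, $L(z)=\sum_{x\in L}\mathbf{P}(x)z^{|x|}$; $\pi_w=\mathbf{P}(w)$. Occurrences of $w$ are position intervals where $w$ appears; two occurrences overlap if their intervals share a position; clumps are equivalence classes of occurrences under the transitive closure of overlapping. Autocorrelation set $\mathcal{C}=\{\epsilon\}\cup\{e\in\mathcal{A}^+: |e|<\ell,\ \exists e'\in\mathcal{A}^+,\ we=e'w\}$, $\mathcal{C}_\circ=\mathcal{C}\setminus\{\epsilon\}$, $\mathcal{K}=\mathcal{C}_\circ\setminus\mathcal{C}_\circ\mathcal{A}^+$ with generating function $K(z)$. Languages: $\mathcal{R}=\{r\in\mathcal{A}^*w: \text{no } r=xwy,\ |y|>0\}$; $\mathcal{M}=\{m\in\mathcal{A}^+: wm\in\mathcal{A}^*w,\ \text{no } wm=xwy,\ |x|>0,|y|>0\}$; $\mathcal{U}=\{u\in\mathcal{A}^*: \text{no } wu=xwy,\ |x|>0\}$; $\mathcal{N}=\{n: w\text{ not a factor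 of }n\}$, with generating functions $R(z),M(z),U(z),N(z)$; explicitly, with $C(z)$ the generating function of $\mathcal{C}$ and $D(z)=\pi_w z^{\ell}+(1-z)C(z)$: $R=\pi_w z^\ell/D$, $M=1+(z-1)/D$, $U=1/D$, $N=C/D$. *)

theory Defs
  imports "HOL-Computational_Algebra.Formal_Power_Series"
begin

definition wprob :: "('a \<Rightarrow> real) \<Rightarrow> 'a list \<Rightarrow> real" where
  "wprob p x = prod_list (map p x)"

definition lang_gf :: "('a::finite \<Rightarrow> real) \<Rightarrow> 'a list set \<Rightarrow> real fps" where
  "lang_gf p L = Abs_fps (\<lambda>n. \<Sum>x\<in>{x. x \<in> L \<and> length x = n}. wprob p x)"

definition occs :: "'a list \<Rightarrow> 'a list \<Rightarrow> nat set" where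
  "occs w x = {i. i + length w \<le> length x \<and> take (length w) (drop i x) = w}"

definition overlap_rel :: "'a list \<Rightarrow> 'a list \<Rightarrow> (nat \<times> nat) set" where
  "overlap_rel w x = {(i, j). i \<in> occs w x \<and> j \<in> occs w x \<and>
      (\<exists>k. i \<le> k \<and> k < i + length w \<and> j \<le> k \<and> k < j + length w)}"

definition clumps :: "'a list \<Rightarrow> 'a list \<Rightarrow> nat set set" where
  "clumps w x = occs w x // (overlap_rel w x)\<^sup>*"

definition clump_prob :: "('a::finite \<Rightarrow> real) \<Rightarrow> 'a list \<Rightarrow> nat \<Rightarrow> nat \<Rightarrow> real" where
  "clump_prob p w n i = (\<Sum>x\<in>{x. length x = n \<and> card (clumps w x) = i}. wprob p x)"

definition autocorr :: "'a list \<Rightarrow> 'a list set" where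
  "autocorr w = {[]} \<union> {e. e \<noteq> [] \<and> length e < length w \<and>
                          (\<exists>e'. e' \<noteq> [] \<and> w @ e = e' @ w)}"

definition autocorr0 :: "'a list \<Rightarrow> 'a list set" where
  "autocorr0 w = autocorr w - {[]}"

definition langK :: "'a list \<Rightarrow> 'a list set" where
  "langK w = autocorr0 w - {c @ y | c y. c \<in> autocorr0 w \<and> y \<noteq> []}"

definition langR :: "'a list \<Rightarrow> 'a list set" where
  "langR w = {r. (\<exists>x. r = x @ w) \<and> \<not> (\<exists>x y. r = x @ w @ y \<and> y \<noteq> [])}"

definition langM :: "'a list \<Rightarrow> 'a list set" where
  "langM w = {m. m \<noteq> [] \<and> (\<exists>x. w @ m = x @ w) \<and>
                 \<not> (\<exists>x y. w @ m = x @ w @ y \<and> x \<noteq> [] \<and> y \<noteq> [])}"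

definition langU :: "'a list \<Rightarrow> 'a list set" where
  "langU w = {u. \<not> (\<exists>x y. w @ u = x @ w @ y \<and> x \<noteq> [])}"

definition langN :: "'a list \<Rightarrow> 'a list set" where
  "langN w = {n. \<not> (\<exists>x y. n = x @ w @ y)}"

end

theory Submission
  imports Defs
begin

(*
  Weight every text x by wprob p x * u^(number of clumps of w in x); the left-hand side
  of the theorem is the generating function of all texts with this weight.

  1. Weighted generating functions of languages are additive over disjoint unions and
     multiplicative over unambiguous concatenations.
  2. Clumps are counted by their leftmost occurrences ("clump starts"): in a finite set of
     positions, the classes of the transitive closure of interval overlap correspond
     bijectively to the positions not overlapped by an earlier position.
  3. The languages N, U, M, K, R are characterised by occurrence positions.  A text with an
     occurrence factors uniquely as (a w) v with v in U (cut at the last occurrence), and a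
     word a w that is not in R factors uniquely as (a' w) m with m in M (cut at the last
     occurrence not ending at the end of the text).  Appending m in M adds a new clump iff
     |m| >= |w|, i.e. iff m is not in K.
  4. Writing F for the weighted series of the texts ending with w, this gives
     LHS = N + F U  and  F = u R + F (K + u (M - K)),  hence  F D = u R  with D the
     denominator of the theorem, and D has constant term 1, so F = u R / D.
*)

section \<open>Weighted generating functions of languages\<close>

definition wgf :: "('a::finite \<Rightarrow> real) \<Rightarrow> ('a list \<Rightarrow> real) \<Rightarrow> 'a list set \<Rightarrow> real fps" where
  "wgf p f L = Abs_fps (\<lambda>n. \<Sum>x\<in>{x. x \<in> L \<and> length x = n}. wprob p x * f x)"

lemma finite_words_of_length: "finite {x::'a::finite list. P x \<and> length x = n}"
proof -
  have "finite {xs::'a list. set xs \<subseteq> UNIV \<and> length xs = n}"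
    by (rule finite_lists_length_eq) simp
  then show ?thesis by (rule finite_subset[rotated]) auto
qed

lemma lang_gf_as_wgf: "lang_gf p L = wgf p (\<lambda>_. 1) L"
  by (simp add: lang_gf_def wgf_def)

lemma wgf_cong: "(\<And>x. x \<in> L \<Longrightarrow> f x = g x) \<Longrightarrow> wgf p f L = wgf p g L"
  unfolding wgf_def by (intro arg_cong[where f=Abs_fps] ext sum.cong) auto

lemma wgf_const: "wgf p (\<lambda>_. c) L = fps_const c * lang_gf p L"
  by (simp add: wgf_def lang_gf_def fps_eq_iff sum_distrib_left mult.commute)

lemma wgf_disjoint_union:
  assumes "A \<inter> B = {}"
  shows "wgf p f (A \<union> B) = wgf p f A + wgf p f B"
proof -
  have "\<And>n. {x. x \<in> A \<union> B \<and> length x = n} =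
            {x. x \<in> A \<and> length x = n} \<union> {x. x \<in> B \<and> length x = n}"
    by auto
  then show ?thesis
    unfolding wgf_def fps_eq_iff
    using assms by (auto simp: finite_words_of_length intro!: sum.union_disjoint)
qed

lemma wprob_append: "wprob p (a @ b) = wprob p a * wprob p b"
  by (simp add: wprob_def)

lemma wgf_unambiguous_concat:
  assumes img: "(\<lambda>(a, b). a @ b) ` (A \<times> B) = C"
    and inj: "inj_on (\<lambda>(a, b). a @ b) (A \<times> B)"
    and mult: "\<And>a b. a \<in> A \<Longrightarrow> b \<in> B \<Longrightarrow> h (a @ b) = f a * g b"
  shows "wgf p h C = wgf p f A * wgf p g B"
proof (rule fps_ext)
  fix n
  define P where "P = {(a, b). a \<in> A \<and> b \<in> B \<and> length a + length b = n}"
  define slice where "slice i = {a. a \<in> A \<and> length a = i} \<times> {b. b \<in> B \<and> length b = n - i}" for i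
  define wt where "wt ab = wprob p (fst ab) * f (fst ab) * (wprob p (snd ab) * g (snd ab))"
    for ab :: "'a list \<times> 'a list"
  have P_slices: "P = (\<Union>i\<le>n. slice i)"
    unfolding P_def slice_def by auto
  have inj_P: "inj_on (\<lambda>(a, b). a @ b) P"
    using inj by (rule inj_on_subset) (auto simp: P_def)
  have img_P: "(\<lambda>(a, b). a @ b) ` P = {x. x \<in> C \<and> length x = n}"
    using img unfolding P_def by auto
  have "fps_nth (wgf p f A * wgf p g B) n = (\<Sum>i\<le>n. \<Sum>ab\<in>slice i. wt ab)"
    by (simp add: wgf_def fps_mult_nth atLeast0AtMost sum_product sum.cartesian_product
        case_prod_beta slice_def wt_def)
  also have "\<dots> = (\<Sum>ab\<in>P. wt ab)"
    unfolding P_slices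
    by (rule sum.UNION_disjoint[symmetric]) (auto simp: slice_def finite_words_of_length)
  also have "\<dots> = (\<Sum>ab\<in>P. wprob p (fst ab @ snd ab) * h (fst ab @ snd ab))"
    by (rule sum.cong) (auto simp: P_def wt_def mult wprob_append)
  also have "\<dots> = (\<Sum>x\<in>{x. x \<in> C \<and> length x = n}. wprob p x * h x)"
    unfolding img_P[symmetric] using inj_P by (subst sum.reindex) (auto simp: case_prod_beta)
  finally show "fps_nth (wgf p h C) n = fps_nth (wgf p f A * wgf p g B) n"
    by (simp add: wgf_def)
qed

lemma inj_on_concat:
  assumes "\<And>t b t' b'. t \<in> A \<Longrightarrow> b \<in> B \<Longrightarrow> t' \<in> A \<Longrightarrow> b' \<in> B \<Longrightarrow>
             t @ b = t' @ b' \<Longrightarrow> length t < length t' \<Longrightarrow> False"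
  shows "inj_on (\<lambda>(a, b). a @ b) (A \<times> B)"
proof (rule inj_onI, clarify)
  fix t b t' b' assume h: "t \<in> A" "b \<in> B" "t' \<in> A" "b' \<in> B" "t @ b = t' @ b'"
  have "length t = length t'"
    using assms[OF h] assms[OF h(3,4,1,2) h(5)[symmetric]] by (metis linorder_neqE_nat)
  then show "t = t' \<and> b = b'" using h(5) by (simp add: append_eq_append_conv)
qed

lemma occs_iff: "i \<in> occs w s \<longleftrightarrow> (\<exists>x y. s = x @ w @ y \<and> length x = i)"
proof
  assume "i \<in> occs w s"
  then have h: "i + length w \<le> length s" "take (length w) (drop i s) = w"
    by (auto simp: occs_def)
  have "s = take i s @ take (length w) (drop i s) @ drop (length w) (drop i s)"
    by (metis append_take_drop_id)
  then have "s = take i s @ w @ drop (i + length w) s" using h by (simp add: add.commute)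
  then show "\<exists>x y. s = x @ w @ y \<and> length x = i" using h(1) by (intro exI) auto
next
  assume "\<exists>x y. s = x @ w @ y \<and> length x = i"
  then show "i \<in> occs w s" by (auto simp: occs_def)
qed

lemma occs_bound: "i \<in> occs w x \<Longrightarrow> i + length w \<le> length x"
  by (auto simp: occs_def)

lemma finite_occs: "finite (occs w x)"
  by (rule finite_subset[of _ "{..length x}"]) (auto simp: occs_def)

lemma occs_append_right: "i \<in> occs w x \<Longrightarrow> i \<in> occs w (x @ y)"
  by (auto simp: occs_def)

lemma occs_append_left: "j \<in> occs w y \<Longrightarrow> length x + j \<in> occs w (x @ y)"
  by (auto simp: occs_def)

lemma occs_suffix: "length a \<in> occs w (a @ w)"
  by (simp add: occs_def)

lemma occs_ending_le: "i \<in> occs w (a @ w) \<Longrightarrow> i \<le> length a"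
  using occs_bound[of i w "a @ w"] by simp

lemma occs_across_suffix:
  assumes "i \<in> occs w (a @ w @ y)"
  shows "i \<in> occs w (a @ w) \<or> (length a \<le> i \<and> i - length a \<in> occs w (w @ y))"
  using assms by (cases "i + length w \<le> length (a @ w)") (auto simp: occs_def)

lemma cut_after_occ:
  assumes i: "i \<in> occs w x"
  defines "rest \<equiv> drop (i + length w) x"
  shows "drop i x = w @ rest"
    and "x = (take i x @ w) @ rest"
    and "\<And>j. j \<in> occs w (w @ rest) \<Longrightarrow> i + j \<in> occs w x"
proof -
  have tw: "take (length w) (drop i x) = w" and len: "i + length w \<le> length x"
    using i by (auto simp: occs_def)
  show drop_i: "drop i x = w @ rest"
    by (metis tw rest_def append_take_drop_id drop_drop add.commute)
  then show "x = (take i x @ w) @ rest" by (metis append.assoc append_take_drop_id)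
  fix j assume "j \<in> occs w (w @ rest)"
  then have "length (take i x) + j \<in> occs w (take i x @ drop i x)"
    using drop_i occs_append_left by metis
  then show "i + j \<in> occs w x" using len by simp
qed

section \<open>Counting clumps by their leftmost occurrences\<close>

text \<open>Positions of a set of intervals of length L that are not overlapped by an interval
  starting earlier: the leftmost members of the clumps.\<close>
definition clump_starts :: "nat \<Rightarrow> nat set \<Rightarrow> nat set" where
  "clump_starts L Oc = {i \<in> Oc. \<not> (\<exists>j\<in>Oc. j < i \<and> i < j + L)}"

definition interval_overlap :: "nat \<Rightarrow> nat set \<Rightarrow> (nat \<times> nat) set" where
  "interval_overlap L Oc = {(i, j). i \<in> Oc \<and> j \<in> Oc \<and>
      (\<exists>k. i \<le> k \<and> k < i + L \<and> j \<le> k \<and> k < j + L)}"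

lemma overlap_rel_eq: "overlap_rel w x = interval_overlap (length w) (occs w x)"
  by (simp add: overlap_rel_def interval_overlap_def)

text \<open>A clump start is the least element of everything it is connected to, because a
  connecting chain can only step below it by overlapping it from the left.\<close>
lemma clump_start_least:
  assumes s: "s \<in> clump_starts L Oc" and sj: "(s, j) \<in> (interval_overlap L Oc)\<^sup>*"
  shows "s \<le> j"
  using sj
proof (induction rule: rtrancl_induct)
  case (step a b)
  show ?case
  proof (rule ccontr)
    assume "\<not> s \<le> b"
    moreover obtain k where "k < a + L" "b \<le> k" "k < b + L" "b \<in> Oc" "a \<le> k"
      using step(2) by (auto simp: interval_overlap_def)
    ultimately show False using s step(3) by (auto simp: clump_starts_def)
  qed
qed simp

text \<open>The least element of a class is a clump start: an earlier overlapping interval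
  would belong to the same class.\<close>
lemma class_min_clump_start:
  assumes fin: "finite Oc" and L: "0 < L" and C: "C \<in> Oc // (interval_overlap L Oc)\<^sup>*"
  shows "Min C \<in> clump_starts L Oc \<and> C = (interval_overlap L Oc)\<^sup>* `` {Min C}"
proof -
  let ?r = "interval_overlap L Oc"
  obtain i where i: "i \<in> Oc" "C = ?r\<^sup>* `` {i}" using C by (auto elim: quotientE)
  have "C \<subseteq> Oc"
  proof
    fix j assume "j \<in> C"
    then have "(i, j) \<in> ?r\<^sup>*" using i by simp
    then show "j \<in> Oc" using i(1)
      by (induction rule: rtrancl_induct) (auto simp: interval_overlap_def)
  qed
  then have finC: "finite C" using fin finite_subset by blast
  have minC: "Min C \<in> C" using finC i by (intro Min_in) auto
  have sym_r: "sym (?r\<^sup>*)" by (rule sym_rtrancl) (auto simp: sym_def interval_overlap_def)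
  have C_min: "C = ?r\<^sup>* `` {Min C}"
  proof -
    have "(i, Min C) \<in> ?r\<^sup>*" "(Min C, i) \<in> ?r\<^sup>*" using minC i sym_r by (auto simp: sym_def)
    then show ?thesis using i(2) by (auto intro: rtrancl_trans)
  qed
  have "\<not> (\<exists>j\<in>Oc. j < Min C \<and> Min C < j + L)"
  proof
    assume "\<exists>j\<in>Oc. j < Min C \<and> Min C < j + L"
    then obtain j where j: "j \<in> Oc" "j < Min C" "Min C < j + L" by auto
    then have "(Min C, j) \<in> ?r"
      using minC \<open>C \<subseteq> Oc\<close> L unfolding interval_overlap_def by (auto intro!: exI[of _ "Min C"])
    then have "j \<in> C" using C_min by auto
    then show False using finC j(2) by (meson Min_le not_le)
  qed
  then show ?thesis using minC \<open>C \<subseteq> Oc\<close> C_min by (auto simp: clump_starts_def)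
qed

lemma card_overlap_classes:
  assumes "finite Oc" and "0 < L"
  shows "card (Oc // (interval_overlap L Oc)\<^sup>*) = card (clump_starts L Oc)"
proof -
  let ?r = "interval_overlap L Oc"
  have "bij_betw (\<lambda>s. ?r\<^sup>* `` {s}) (clump_starts L Oc) (Oc // ?r\<^sup>*)"
  proof (rule bij_betw_imageI)
    show "inj_on (\<lambda>s. ?r\<^sup>* `` {s}) (clump_starts L Oc)"
    proof (rule inj_onI)
      fix s s' assume s: "s \<in> clump_starts L Oc" "s' \<in> clump_starts L Oc"
        and eq: "?r\<^sup>* `` {s} = ?r\<^sup>* `` {s'}"
      have "s' \<in> ?r\<^sup>* `` {s}" "s \<in> ?r\<^sup>* `` {s'}" using eq by auto
      then show "s = s'" using clump_start_least s by (metis Image_singleton_iff le_antisym)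
    qed
    show "(\<lambda>s. ?r\<^sup>* `` {s}) ` clump_starts L Oc = Oc // ?r\<^sup>*"
      using class_min_clump_start[OF assms]
      by (auto simp: clump_starts_def intro: quotientI)
  qed
  then show ?thesis by (metis bij_betw_same_card)
qed

definition clump_count :: "'a list \<Rightarrow> 'a list \<Rightarrow> nat" where
  "clump_count w x = card (clump_starts (length w) (occs w x))"

lemma card_clumps: "w \<noteq> [] \<Longrightarrow> card (clumps w x) = clump_count w x"
  unfolding clumps_def clump_count_def overlap_rel_eq
  by (rule card_overlap_classes) (auto simp: finite_occs)

lemma clump_count_le_length: "w \<noteq> [] \<Longrightarrow> clump_count w x \<le> length x"
proof -
  assume "w \<noteq> []"
  then have "clump_starts (length w) (occs w x) \<subseteq> {..<length x}"
    by (cases w) (auto simp: clump_starts_def occs_def)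
  then show ?thesis unfolding clump_count_def using card_mono[of "{..<length x}"] by fastforce
qed

lemma clump_starts_insert_last:
  assumes "\<forall>j\<in>Oc. j < e"
  shows "clump_starts L (insert e Oc) =
           clump_starts L Oc \<union> (if \<exists>j\<in>Oc. e < j + L then {} else {e})"
  using assms unfolding clump_starts_def by (auto; fastforce)

section \<open>The languages in terms of occurrences\<close>

definition langE :: "'a list \<Rightarrow> 'a list set" where
  "langE w = {x. \<exists>a. x = a @ w}"

lemma langN_iff: "x \<in> langN w \<longleftrightarrow> occs w x = {}"
proof -
  have "(\<exists>a b. x = a @ w @ b) \<longleftrightarrow> (\<exists>i. i \<in> occs w x)"
    by (auto simp: occs_iff)
  then show ?thesis unfolding langN_def by auto
qed

lemma langR_iff:
  "r \<in> langR w \<longleftrightarrow> r \<in> langE w \<and> (\<forall>i\<in>occs w r. length r \<le> i + length w)"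
proof -
  have "(\<exists>x y. r = x @ w @ y \<and> y \<noteq> []) \<longleftrightarrow> (\<exists>i\<in>occs w r. i + length w < length r)"
  proof
    assume "\<exists>x y. r = x @ w @ y \<and> y \<noteq> []"
    then obtain x y where "r = x @ w @ y" "y \<noteq> []" by blast
    then show "\<exists>i\<in>occs w r. i + length w < length r"
      by (intro bexI[of _ "length x"]) (auto simp: occs_iff)
  next
    assume "\<exists>i\<in>occs w r. i + length w < length r"
    then obtain x y where "r = x @ w @ y" "length x + length w < length r"
      by (auto simp: occs_iff)
    then show "\<exists>x y. r = x @ w @ y \<and> y \<noteq> []" by (intro exI[of _ x] exI[of _ y]) auto
  qed
  then show ?thesis unfolding langR_def langE_def by (auto simp: not_less)
qed

lemma langU_iff: "v \<in> langU w \<longleftrightarrow> (\<forall>i\<in>occs w (w @ v). i = 0)"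
proof -
  have "(\<exists>x y. w @ v = x @ w @ y \<and> x \<noteq> []) \<longleftrightarrow> (\<exists>i\<in>occs w (w @ v). i \<noteq> 0)"
  proof
    assume "\<exists>x y. w @ v = x @ w @ y \<and> x \<noteq> []"
    then obtain x y where "w @ v = x @ w @ y" "x \<noteq> []" by blast
    then show "\<exists>i\<in>occs w (w @ v). i \<noteq> 0"
      by (intro bexI[of _ "length x"]) (auto simp: occs_iff)
  next
    assume "\<exists>i\<in>occs w (w @ v). i \<noteq> 0"
    then obtain x y where "w @ v = x @ w @ y" "length x \<noteq> 0"
      by (auto simp: occs_iff)
    then show "\<exists>x y. w @ v = x @ w @ y \<and> x \<noteq> []" by (intro exI[of _ x] exI[of _ y]) auto
  qed
  then show ?thesis unfolding langU_def mem_Collect_eq by (simp only: not_ex) auto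
qed

lemma langM_iff:
  "m \<in> langM w \<longleftrightarrow>
     m \<noteq> [] \<and> (\<exists>a. w @ m = a @ w) \<and> (\<forall>i\<in>occs w (w @ m). i = 0 \<or> length m \<le> i)"
proof -
  have "(\<exists>x y. w @ m = x @ w @ y \<and> x \<noteq> [] \<and> y \<noteq> []) \<longleftrightarrow>
        (\<exists>i\<in>occs w (w @ m). i \<noteq> 0 \<and> i < length m)"
  proof
    assume "\<exists>x y. w @ m = x @ w @ y \<and> x \<noteq> [] \<and> y \<noteq> []"
    then obtain x y where xy: "w @ m = x @ w @ y" "x \<noteq> []" "y \<noteq> []" by blast
    have "length (w @ m) = length (x @ w @ y)" using xy(1) by simp
    then have "length x < length m" using xy(3) by simp
    then show "\<exists>i\<in>occs w (w @ m). i \<noteq> 0 \<and> i < length m"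
      using xy by (intro bexI[of _ "length x"]) (auto simp: occs_iff)
  next
    assume "\<exists>i\<in>occs w (w @ m). i \<noteq> 0 \<and> i < length m"
    then obtain x y where xy: "w @ m = x @ w @ y" "length x \<noteq> 0" "length x < length m"
      by (auto simp: occs_iff)
    have "length (w @ m) = length (x @ w @ y)" using xy(1) by simp
    then have "y \<noteq> []" using xy(3) by auto
    then show "\<exists>x y. w @ m = x @ w @ y \<and> x \<noteq> [] \<and> y \<noteq> []"
      using xy by (intro exI[of _ x] exI[of _ y]) auto
  qed
  then show ?thesis unfolding langM_def mem_Collect_eq by (simp only: not_ex not_less) auto
qed

lemma langK_iff: "m \<in> langK w \<longleftrightarrow> m \<in> langM w \<and> length m < length w"
proof
  assume h: "m \<in> langK w"
  then have m: "m \<noteq> []" "length m < length w" "\<exists>e'. w @ m = e' @ w"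
    by (auto simp: langK_def autocorr0_def autocorr_def)
  have minimal: "\<not> (\<exists>c y. m = c @ y \<and> c \<in> autocorr0 w \<and> y \<noteq> [])"
    using h by (auto simp: langK_def)
  have "\<not> (\<exists>x y. w @ m = x @ w @ y \<and> x \<noteq> [] \<and> y \<noteq> [])"
  proof
    assume "\<exists>x y. w @ m = x @ w @ y \<and> x \<noteq> [] \<and> y \<noteq> []"
    then obtain x y where xy: "w @ m = x @ w @ y" "x \<noteq> []" "y \<noteq> []" by auto
    have lens: "length x + length y = length m" using arg_cong[OF xy(1), of length] by simp
    define c where "c = take (length x) m"
    have "w @ c = x @ w"
      using arg_cong[OF xy(1), of "take (length w + length x)"] by (simp add: c_def add.commute)
    then have "c \<in> autocorr0 w"
      using xy(2,3) lens m(2) by (auto simp: autocorr0_def autocorr_def c_def)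
    moreover have "length x < length m" using lens xy(3) by (cases y) auto
    then have "m = c @ drop (length x) m \<and> drop (length x) m \<noteq> []"
      by (auto simp: c_def)
    ultimately show False using minimal by blast
  qed
  then show "m \<in> langM w \<and> length m < length w" using m by (auto simp: langM_def)
next
  assume h: "m \<in> langM w \<and> length m < length w"
  then obtain a where a: "w @ m = a @ w" "m \<noteq> []" by (auto simp: langM_def)
  then have "a \<noteq> []" using arg_cong[OF a(1), of length] by auto
  then have "m \<in> autocorr0 w" using a h by (auto simp: autocorr0_def autocorr_def)
  moreover have "\<not> (\<exists>c y. m = c @ y \<and> c \<in> autocorr0 w \<and> y \<noteq> [])"
  proof
    assume "\<exists>c y. m = c @ y \<and> c \<in> autocorr0 w \<and> y \<noteq> []"
    then obtain c y e' where "m = c @ y" "y \<noteq> []" "e' \<noteq> []" "w @ c = e' @ w"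
      by (auto simp: autocorr0_def autocorr_def)
    then have "w @ m = e' @ w @ y" "e' \<noteq> []" "y \<noteq> []" by simp_all
    then show False using h unfolding langM_def by blast
  qed
  ultimately show "m \<in> langK w" by (auto simp: langK_def)
qed

section \<open>Unique factorisations\<close>

lemma occs_append_langM:
  assumes m: "m \<in> langM w"
  shows "occs w (a @ w @ m) = insert (length a + length m) (occs w (a @ w))"
proof
  from m obtain b where b: "w @ m = b @ w" and only: "\<forall>i\<in>occs w (w @ m). i = 0 \<or> length m \<le> i"
    by (auto simp: langM_iff)
  have "length b = length m" using arg_cong[OF b, of length] by simp
  then have "length m \<in> occs w (w @ m)" using occs_suffix[of b w] b by simp
  then show "insert (length a + length m) (occs w (a @ w)) \<subseteq> occs w (a @ w @ m)"
    using occs_append_left[of "length m" w "w @ m" a] occs_append_right[of _ w "a @ w" m] by auto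
  show "occs w (a @ w @ m) \<subseteq> insert (length a + length m) (occs w (a @ w))"
  proof
    fix i assume i: "i \<in> occs w (a @ w @ m)"
    from occs_across_suffix[OF i] show "i \<in> insert (length a + length m) (occs w (a @ w))"
    proof
      assume j: "length a \<le> i \<and> i - length a \<in> occs w (w @ m)"
      then have "i - length a = 0 \<or> length m \<le> i - length a" using only by blast
      moreover have "i - length a + length w \<le> length w + length m"
        using occs_bound[of "i - length a" w "w @ m"] j by simp
      ultimately have "i = length a \<or> i = length a + length m" using j by linarith
      then show ?thesis using occs_suffix[of a w] by auto
    qed simp
  qed
qed

lemma occs_append_langU:
  assumes "v \<in> langU w"
  shows "occs w (a @ w @ v) = occs w (a @ w)"
  using occs_across_suffix[of _ w a v] occs_append_right[of _ w "a @ w" v] occs_suffix[of a w] assms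
  by (fastforce simp: langU_iff)

lemma inj_langE_langM: "inj_on (\<lambda>(a, b). a @ b) (langE w \<times> langM w)"
proof (rule inj_on_concat)
  fix t m t' m' assume h: "t \<in> langE w" "m \<in> langM w" "t' \<in> langE w" "m' \<in> langM w"
    "t @ m = t' @ m'" "length t < length t'"
  obtain a a' where a: "t = a @ w" "t' = a' @ w" using h by (auto simp: langE_def)
  have "length a' \<in> occs w (a @ w @ m)"
    using occs_append_right[OF occs_suffix[of a' w], of m'] h(5) a by simp
  have "m' \<noteq> []" using h(4) by (simp add: langM_iff)
  moreover have "length a + length m = length a' + length m'"
    using arg_cong[OF h(5), of length] a by simp
  ultimately have inner: "0 < length a' - length a" "length a' - length a < length m"
    using h(6) a by (cases m'; simp)+
  from occs_across_suffix[OF \<open>length a' \<in> occs w (a @ w @ m)\<close>] show False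
  proof
    assume "length a' \<in> occs w (a @ w)"
    then show False using occs_ending_le h(6) a by fastforce
  next
    assume "length a \<le> length a' \<and> length a' - length a \<in> occs w (w @ m)"
    then show False using inner h(2) by (auto simp: langM_iff)
  qed
qed

lemma inj_langE_langU: "inj_on (\<lambda>(a, b). a @ b) (langE w \<times> langU w)"
proof (rule inj_on_concat)
  fix t v t' v' assume h: "t \<in> langE w" "v \<in> langU w" "t' \<in> langE w" "v' \<in> langU w"
    "t @ v = t' @ v'" "length t < length t'"
  obtain a a' where a: "t = a @ w" "t' = a' @ w" using h by (auto simp: langE_def)
  have "length a' \<in> occs w (a @ w @ v)"
    using occs_append_right[OF occs_suffix[of a' w], of v'] h(5) a by simp
  then show False
    using occs_across_suffix[of "length a'" w a v] occs_ending_le h(2,6) a by (fastforce simp: langU_iff)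
qed

lemma cut_after_last_occ:
  assumes i: "i \<in> occs w x" and last: "\<forall>j\<in>occs w x. j \<le> i"
  shows "drop (i + length w) x \<in> langU w"
  unfolding langU_iff using cut_after_occ(3)[OF i] last by fastforce

lemma cut_after_last_inner_occ:
  assumes x: "x \<in> langE w" and i: "i \<in> occs w x" "i + length w < length x"
    and last: "\<forall>j\<in>occs w x. j + length w < length x \<longrightarrow> j \<le> i"
  shows "drop (i + length w) x \<in> langM w"
  unfolding langM_iff
proof (intro conjI ballI)
  let ?m = "drop (i + length w) x"
  show "?m \<noteq> []" using i by simp
  obtain a where a: "x = a @ w" using x by (auto simp: langE_def)
  have "drop i x = drop i a @ w" using i a by simp
  then show "\<exists>b. w @ ?m = b @ w" using cut_after_occ(1)[OF i(1)] by metis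
  fix j assume j: "j \<in> occs w (w @ ?m)"
  show "j = 0 \<or> length ?m \<le> j"
  proof (rule disjCI)
    assume "\<not> length ?m \<le> j"
    then have "(i + j) + length w < length x" using i(2) by simp
    then show "j = 0" using last cut_after_occ(3)[OF i(1) j] by fastforce
  qed
qed

lemma concat_langE_langU: "(\<lambda>(a, b). a @ b) ` (langE w \<times> langU w) = - langN w"
proof
  show "(\<lambda>(a, b). a @ b) ` (langE w \<times> langU w) \<subseteq> - langN w"
    using occs_append_right[OF occs_suffix] by (fastforce simp: langE_def langN_iff)
  show "- langN w \<subseteq> (\<lambda>(a, b). a @ b) ` (langE w \<times> langU w)"
  proof
    fix x assume "x \<in> - langN w"
    then have "occs w x \<noteq> {}" by (simp add: langN_iff)
    then have i: "Max (occs w x) \<in> occs w x" using finite_occs by (rule Max_in[rotated])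
    have last: "\<forall>j\<in>occs w x. j \<le> Max (occs w x)" using finite_occs Max_ge by blast
    show "x \<in> (\<lambda>(a, b). a @ b) ` (langE w \<times> langU w)"
    proof (rule image_eqI)
      let ?i = "Max (occs w x)"
      show "x = (\<lambda>(a, b). a @ b) (take ?i x @ w, drop (?i + length w) x)"
        using cut_after_occ(2)[OF i] by simp
      show "(take ?i x @ w, drop (?i + length w) x) \<in> langE w \<times> langU w"
        using cut_after_last_occ[OF i last] by (auto simp: langE_def)
    qed
  qed
qed

lemma concat_langE_langM: "(\<lambda>(a, b). a @ b) ` (langE w \<times> langM w) = langE w - langR w"
proof
  show "(\<lambda>(a, b). a @ b) ` (langE w \<times> langM w) \<subseteq> langE w - langR w"
  proof clarify
    fix t m assume t: "t \<in> langE w" and m: "m \<in> langM w"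
    obtain a where a: "t = a @ w" using t by (auto simp: langE_def)
    obtain b where b: "w @ m = b @ w" and "m \<noteq> []" using m by (auto simp: langM_iff)
    have "t @ m = (a @ b) @ w" using a b by simp
    then have "t @ m \<in> langE w" by (auto simp: langE_def)
    moreover have "length a \<in> occs w (t @ m)" using a occs_append_right[OF occs_suffix] by simp
    then have "t @ m \<notin> langR w" using a \<open>m \<noteq> []\<close> langR_iff[of "t @ m" w] by fastforce
    ultimately show "t @ m \<in> langE w - langR w" by simp
  qed
  show "langE w - langR w \<subseteq> (\<lambda>(a, b). a @ b) ` (langE w \<times> langM w)"
  proof
    fix x assume x: "x \<in> langE w - langR w"
    define S where "S = {i \<in> occs w x. i + length w < length x}"
    have "S \<noteq> {}" using x by (auto simp: langR_iff S_def not_le)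
    moreover have finS: "finite S" using finite_occs[of w x] by (simp add: S_def)
    ultimately have "Max S \<in> S" by (rule Max_in[rotated])
    then have i: "Max S \<in> occs w x" "Max S + length w < length x" by (auto simp: S_def)
    have last: "\<forall>j\<in>occs w x. j + length w < length x \<longrightarrow> j \<le> Max S"
      using Max_ge[OF finS] by (auto simp: S_def)
    show "x \<in> (\<lambda>(a, b). a @ b) ` (langE w \<times> langM w)"
    proof (rule image_eqI)
      show "x = (\<lambda>(a, b). a @ b) (take (Max S) x @ w, drop (Max S + length w) x)"
        using cut_after_occ(2)[OF i(1)] by simp
      show "(take (Max S) x @ w, drop (Max S + length w) x) \<in> langE w \<times> langM w"
        using cut_after_last_inner_occ[OF _ i last] x by (auto simp: langE_def)
    qed
  qed
qed

section \<open>Clump counts along the factorisations\<close>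

lemma clump_count_langN: "x \<in> langN w \<Longrightarrow> clump_count w x = 0"
  by (simp add: clump_count_def langN_iff clump_starts_def)

lemma clump_count_langR: "r \<in> langR w \<Longrightarrow> clump_count w r = 1"
proof -
  assume r: "r \<in> langR w"
  then obtain a where a: "r = a @ w" and only: "\<forall>i\<in>occs w r. length r \<le> i + length w"
    by (auto simp: langR_iff langE_def)
  have "occs w r = {length a}"
    using only occs_bound[of _ w r] occs_suffix[of a w] a by fastforce
  moreover have "clump_starts (length w) {length a} = {length a}"
    by (auto simp: clump_starts_def)
  ultimately show ?thesis by (simp add: clump_count_def)
qed

lemma clump_count_langU: "v \<in> langU w \<Longrightarrow> clump_count w (a @ w @ v) = clump_count w (a @ w)"
  unfolding clump_count_def by (simp add: occs_append_langU)

lemma clump_count_langM: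
  assumes m: "m \<in> langM w"
  shows "clump_count w (a @ w @ m) = clump_count w (a @ w) + (if length m < length w then 0 else 1)"
proof -
  let ?e = "length a + length m" and ?Oc = "occs w (a @ w)"
  have "m \<noteq> []" using m by (auto simp: langM_iff)
  then have "length a < ?e" by (cases m) auto
  then have before: "\<forall>j\<in>?Oc. j < ?e" using occs_ending_le by (meson le_less_trans)
  have reach: "(\<exists>j\<in>?Oc. ?e < j + length w) \<longleftrightarrow> length m < length w"
  proof
    assume "\<exists>j\<in>?Oc. ?e < j + length w"
    then obtain j where "j \<le> length a" "?e < j + length w" using occs_ending_le by blast
    then show "length m < length w" by linarith
  next
    assume "length m < length w"
    then show "\<exists>j\<in>?Oc. ?e < j + length w" using occs_suffix[of a w] by (intro bexI) auto
  qed
  have "finite (clump_starts (length w) ?Oc)" "?e \<notin> clump_starts (length w) ?Oc"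
    using finite_occs[of w "a @ w"] before by (auto simp: clump_starts_def)
  then show ?thesis
    unfolding clump_count_def occs_append_langM[OF m] clump_starts_insert_last[OF before] reach
    by auto
qed

lemma clump_series_as_wgf:
  assumes "w \<noteq> []"
  shows "Abs_fps (\<lambda>n. \<Sum>i\<le>n. clump_prob p w n i * u ^ i) = wgf p (\<lambda>x. u ^ clump_count w x) UNIV"
proof (rule fps_ext)
  fix n
  define X where "X = {x::'a list. length x = n}"
  have "(\<Sum>i\<le>n. clump_prob p w n i * u ^ i) =
        (\<Sum>i\<le>n. \<Sum>x\<in>{x \<in> X. clump_count w x = i}. wprob p x * u ^ clump_count w x)"
    unfolding clump_prob_def sum_distrib_right card_clumps[OF assms] X_def
    by (intro sum.cong) auto
  also have "\<dots> = (\<Sum>x\<in>X. wprob p x * u ^ clump_count w x)"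
    using clump_count_le_length[OF assms] finite_words_of_length[of "\<lambda>_. True" n]
    by (intro sum.group) (auto simp: X_def)
  finally show "fps_nth (Abs_fps (\<lambda>n. \<Sum>i\<le>n. clump_prob p w n i * u ^ i)) n =
                fps_nth (wgf p (\<lambda>x. u ^ clump_count w x) UNIV) n"
    by (simp add: wgf_def X_def)
qed

text \<open>First decomposition: a text has no occurrence, or factors at its last occurrence.\<close>
lemma clump_series_decomposition:
  "wgf p (\<lambda>x. u ^ clump_count w x) UNIV =
     lang_gf p (langN w) + wgf p (\<lambda>x. u ^ clump_count w x) (langE w) * lang_gf p (langU w)"
proof -
  have "wgf p (\<lambda>x. u ^ clump_count w x) (langN w) = lang_gf p (langN w)"
    unfolding lang_gf_as_wgf by (rule wgf_cong) (simp add: clump_count_langN)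
  moreover have "wgf p (\<lambda>x. u ^ clump_count w x) (- langN w) =
      wgf p (\<lambda>x. u ^ clump_count w x) (langE w) * lang_gf p (langU w)"
    unfolding lang_gf_as_wgf
    by (rule wgf_unambiguous_concat[OF concat_langE_langU inj_langE_langU])
       (auto simp: langE_def clump_count_langU)
  ultimately show ?thesis
    using wgf_disjoint_union[of "langN w" "- langN w" p] by simp
qed

text \<open>Second decomposition: a text ending with w is in R, or factors at its last inner
  occurrence; the factor from M carries weight u iff it opens a new clump.\<close>
lemma ending_series_equation:
  fixes p :: "'a::finite \<Rightarrow> real" and w :: "'a list" and u :: real
  defines "F \<equiv> wgf p (\<lambda>x. u ^ clump_count w x) (langE w)"
  shows "F * (1 - fps_const u * lang_gf p (langM w) + fps_const (u - 1) * lang_gf p (langK w))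
           = fps_const u * lang_gf p (langR w)"
proof -
  define g where "g m = (if length m < length w then 1 else u)" for m :: "'a list"
  have R: "wgf p (\<lambda>x. u ^ clump_count w x) (langR w) = fps_const u * lang_gf p (langR w)"
    unfolding wgf_const[symmetric] by (rule wgf_cong) (simp add: clump_count_langR)
  have EM: "wgf p (\<lambda>x. u ^ clump_count w x) (langE w - langR w) = F * wgf p g (langM w)"
    unfolding F_def
    by (rule wgf_unambiguous_concat[OF concat_langE_langM inj_langE_langM])
       (auto simp: langE_def g_def clump_count_langM power_add)
  have "langR w \<union> (langE w - langR w) = langE w" by (auto simp: langR_iff)
  then have F_eq: "F = fps_const u * lang_gf p (langR w) + F * wgf p g (langM w)"
    using wgf_disjoint_union[of "langR w" "langE w - langR w" p] R EM by (simp add: F_def)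
  have K: "wgf p g (langK w) = lang_gf p (langK w)"
    unfolding lang_gf_as_wgf by (rule wgf_cong) (simp add: g_def langK_iff)
  have MK: "wgf p g (langM w - langK w) = fps_const u * lang_gf p (langM w - langK w)"
    unfolding wgf_const[symmetric] by (rule wgf_cong) (simp add: g_def langK_iff)
  have M_split: "langK w \<union> (langM w - langK w) = langM w" by (auto simp: langK_iff)
  then have "wgf p g (langM w) = wgf p g (langK w) + wgf p g (langM w - langK w)"
    and "lang_gf p (langM w) = lang_gf p (langK w) + lang_gf p (langM w - langK w)"
    using wgf_disjoint_union[of "langK w" "langM w - langK w" p] by (simp_all add: lang_gf_as_wgf)
  then have "wgf p g (langM w) =
      fps_const u * lang_gf p (langM w) - fps_const (u - 1) * lang_gf p (langK w)"
    unfolding K MK by (simp add: algebra_simps fps_const_sub[symmetric])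
  with F_eq show ?thesis by (simp add: algebra_simps)
qed

lemma lang_gf_nth_0: "[] \<notin> L \<Longrightarrow> fps_nth (lang_gf p L) 0 = 0"
proof -
  assume "[] \<notin> L"
  then have "{x. x \<in> L \<and> length x = 0} = {}" by auto
  then show ?thesis unfolding lang_gf_def fps_nth_Abs_fps by (simp only: sum.empty)
qed

theorem mainTheorem5:
  fixes p :: "'a::finite \<Rightarrow> real" and w :: "'a list" and u :: real
  assumes "card (UNIV :: 'a set) \<ge> 2"
    and "\<And>a. p a > 0"
    and "(\<Sum>a\<in>UNIV. p a) = 1"
    and "length w \<ge> 2"
  shows "Abs_fps (\<lambda>n. \<Sum>i\<le>n. clump_prob p w n i * u ^ i) =
         lang_gf p (langN w) +
         fps_const u * lang_gf p (langR w) * lang_gf p (langU w) *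
           inverse (1 - fps_const u * lang_gf p (langM w)
                      + fps_const (u - 1) * lang_gf p (langK w))"
proof -
  have w: "w \<noteq> []" using assms(4) by auto
  define F where "F = wgf p (\<lambda>x. u ^ clump_count w x) (langE w)"
  define D where "D = 1 - fps_const u * lang_gf p (langM w) + fps_const (u - 1) * lang_gf p (langK w)"
  have FD: "F * D = fps_const u * lang_gf p (langR w)"
    unfolding F_def D_def by (rule ending_series_equation)
  have "fps_nth D 0 = 1"
    by (simp add: D_def lang_gf_nth_0 langM_def langK_def autocorr0_def)
  then have "F = F * D * inverse D" by (simp add: mult.assoc inverse_mult_eq_1')
  then have "F = fps_const u * lang_gf p (langR w) * inverse D" by (simp only: FD)
  then show ?thesis
    unfolding clump_series_as_wgf[OF w] clump_series_decomposition D_def[symmetric] F_def[symmetric]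
    by (simp add: algebra_simps)
qed

end
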